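(* There exist absolute constants $c, C > 0$ and $m_0$ such that the following holds for every integer $m \geq m_0$. Let $s = \lceil \log_2 m \rceil + 2$, $k = m^2 s$, $n = km$, and let $\mathcal{F} \subset \mathcal{P}([n])$ be constructed as follows: partition $[n]$ into blocks $B_1,\ldots,B_m$ with $|B_i| = k$, choose $T_i \subset B_i$ with $|T_i| = s$, put $T = \bigcup_i T_i$, and let $\mathcal{F}$ be the union-closed family generated by $\{B_i \cup \{t\} : i \in [m],\ t \in T\}$. Let $\mathcal{F}' = \mathcal{F} \cup \{[n]\setminus\{j\} : j \in [n]\}$. Then $\mathcal{F}'$ is union-closed, $\mathcal{F}'$ separates the points of $[n]$, and $$c\,\frac{\log_2\log_2|\mathcal{F}'|}{\log_2|\mathcal{F}'|} \leq \mathrm{AOD}(\mathcal{F}') \leq C\,\frac{\log_2\log_2|\mathcal{F}'|}{\log_2|\mathcal{F}'|}.$$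
   Context: $[n] = \{1,\ldots,n\}$. A family of sets is union-closed if it contains the union of any two of its members; the union-closed family generated by $\mathcal{G}$ is the smallest union-closed family containing $\mathcal{G}$. A family $\mathcal{F} \subset \mathcal{P}([n])$ separates the points of $[n]$ if for all $i \neq j$ in $[n]$ there is $A \in \mathcal{F}$ with $|A \cap \{i,j\}| = 1$. For a finite nonempty family $\mathcal{F} \subset \mathcal{P}(X)$ and $x \in X$, the abundance is $\gamma_x = |\{A \in \mathcal{F} : x \in A\}|/|\mathcal{F}|$. For $\mathcal{F} \neq \emptyset,\{\emptyset\}$, the average overlap density is $\mathrm{AOD}(\mathcal{F}) = \frac{1}{|\mathcal{F}\setminus\{\emptyset\}|}\sum_{A \in \mathcal{F}\setminus\{\emptyset\}} \frac{1}{|A|}\sum_{x \in A}\gamma_x$. *)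

theory Defs
  imports Complex_Main
begin

definition union_closed :: "'a set set \<Rightarrow> bool" where
  "union_closed F \<longleftrightarrow> (\<forall>A\<in>F. \<forall>B\<in>F. A \<union> B \<in> F)"

definition uc_generated :: "'a set set \<Rightarrow> 'a set set" where
  "uc_generated G = \<Inter>{H. G \<subseteq> H \<and> union_closed H}"

definition separates_points :: "nat \<Rightarrow> nat set set \<Rightarrow> bool" where
  "separates_points n F \<longleftrightarrow>
     (\<forall>i\<in>{1..n}. \<forall>j\<in>{1..n}. i \<noteq> j \<longrightarrow> (\<exists>A\<in>F. card (A \<inter> {i, j}) = 1))"

definition abundance :: "'a set set \<Rightarrow> 'a \<Rightarrow> real" where
  "abundance F x = real (card {A\<in>F. x \<in> A}) / real (card F)"

definition AOD :: "'a set set \<Rightarrow> real" where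
  "AOD F = (1 / real (card (F - {{}}))) *
     (\<Sum>A\<in>F - {{}}. (1 / real (card A)) * (\<Sum>x\<in>A. abundance F x))"

end

theory Submission
  imports Defs "HOL-Library.FuncSet"
begin

text \<open>
  A member of the generated family F meets every block B i either in all of B i or in a subset
  of T i, and it is full on at least one block; conversely every such set is a union of
  generators. So F has (2^s+1)^m - 2^(sm) members, and a point of B i outside T lies exactly
  in the members that are full on block i, a proportion of order 1/m. The s m points of T have
  abundance at most 1 but make up only a fraction s m / k = 1/m of any member, so the AOD is
  of order 1/m. The n co-singletons change all counts by at most a constant factor, and
  log |F'| is of order m log m, which turns 1/m into log log |F'| / log |F'|.
\<close>

lemma union_closed_uc_generated: "union_closed (uc_generated G)"
  unfolding union_closed_def uc_generated_def by blast

lemma uc_generated_superset: "G \<subseteq> uc_generated G"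
  unfolding uc_generated_def by blast

lemma uc_generated_minimal: "G \<subseteq> H \<Longrightarrow> union_closed H \<Longrightarrow> uc_generated G \<subseteq> H"
  unfolding uc_generated_def by blast

lemma union_closed_Union:
  assumes "union_closed H" "finite X" "X \<noteq> {}" "X \<subseteq> H"
  shows "\<Union>X \<in> H"
  using assms(2-4)
proof (induction X rule: finite_ne_induct)
  case (insert x X)
  then show ?case using assms(1) unfolding union_closed_def by simp
qed simp

subsection \<open>Bounds on the average overlap density\<close>

lemma abundance_le_1: "finite F \<Longrightarrow> abundance F x \<le> 1"
  unfolding abundance_def by (simp add: divide_le_eq_1 card_mono card_gt_0_iff)

lemma AOD_ge_abundance_bound:
  assumes "finite F" "F \<noteq> {}" "{} \<notin> F" "\<And>A. A \<in> F \<Longrightarrow> finite A"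
    and "\<And>x. x \<in> \<Union>F \<Longrightarrow> g \<le> abundance F x"
  shows "g \<le> AOD F"
proof -
  have "g \<le> 1 / real (card A) * (\<Sum>x\<in>A. abundance F x)" if A: "A \<in> F" for A
  proof -
    have "0 < card A" using A assms(3,4) by (metis card_gt_0_iff)
    moreover have "real (card A) * g \<le> (\<Sum>x\<in>A. abundance F x)"
      using A assms(5) by (intro sum_bounded_below) auto
    ultimately show ?thesis by (simp add: field_simps)
  qed
  then have "real (card F) * g \<le> (\<Sum>A\<in>F. 1 / real (card A) * (\<Sum>x\<in>A. abundance F x))"
    by (intro sum_bounded_below) auto
  moreover have "F - {{}} = F" using assms(3) by blast
  ultimately show ?thesis
    using assms(1,2) unfolding AOD_def by (simp add: field_simps card_gt_0_iff)
qed

lemma AOD_le_abundance_bound: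
  fixes \<sigma> \<kappa> \<gamma> :: real
  assumes "finite F" "F \<noteq> {}" "0 < \<kappa>" "\<And>A. A \<in> F \<Longrightarrow> finite A \<and> \<kappa> \<le> card A"
    and "finite S" "card S \<le> \<sigma>" "0 \<le> \<gamma>"
    and "\<And>x. x \<in> \<Union>F \<Longrightarrow> x \<notin> S \<Longrightarrow> abundance F x \<le> \<gamma>"
  shows "AOD F \<le> \<sigma> / \<kappa> + \<gamma>"
proof -
  have "1 / real (card A) * (\<Sum>x\<in>A. abundance F x) \<le> \<sigma> / \<kappa> + \<gamma>" if A: "A \<in> F" for A
  proof -
    have fin: "finite A" and big: "\<kappa> \<le> card A" using assms(4)[OF A] by auto
    have "(\<Sum>x\<in>A. abundance F x) = (\<Sum>x\<in>A \<inter> S. abundance F x) + (\<Sum>x\<in>A - S. abundance F x)"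
      using fin by (rule sum.Int_Diff)
    also have "\<dots> \<le> real (card (A \<inter> S)) * 1 + real (card (A - S)) * \<gamma>"
      using abundance_le_1[OF assms(1)] assms(8) A
      by (intro add_mono sum_bounded_above) auto
    also have "\<dots> \<le> \<sigma> + real (card A) * \<gamma>"
      using card_mono[OF assms(5), of "A \<inter> S"] card_mono[OF fin, of "A - S"] assms(6,7)
      by (intro add_mono mult_right_mono) auto
    finally have sum_le: "(\<Sum>x\<in>A. abundance F x) \<le> \<sigma> + real (card A) * \<gamma>" .
    have "1 / real (card A) * (\<Sum>x\<in>A. abundance F x) \<le> \<sigma> / real (card A) + \<gamma>"
      using sum_le big assms(3) by (simp add: field_simps)
    also have "\<sigma> / real (card A) \<le> \<sigma> / \<kappa>"
      using big assms(3,6) by (intro divide_left_mono) auto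
    finally show ?thesis by simp
  qed
  then have "(\<Sum>A\<in>F. 1 / real (card A) * (\<Sum>x\<in>A. abundance F x)) \<le> real (card F) * (\<sigma> / \<kappa> + \<gamma>)"
    by (intro sum_bounded_above) auto
  moreover have "F - {{}} = F" using assms(3,4) by force
  ultimately show ?thesis
    using assms(1,2) unfolding AOD_def by (simp add: field_simps card_gt_0_iff)
qed

subsection \<open>Estimates on powers and logarithms\<close>

lemma two_power_ceiling_log_bounds:
  assumes "1 \<le> m"
  shows "m \<le> 2 ^ nat \<lceil>log 2 (real m)\<rceil>" "2 ^ nat \<lceil>log 2 (real m)\<rceil> < 2 * m"
proof -
  define x where "x = log 2 (real m)"
  have "0 \<le> x" using assms by (simp add: x_def)
  then have pow: "real (2 ^ nat \<lceil>x\<rceil>) = 2 powr real_of_int \<lceil>x\<rceil>"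
    by (simp add: powr_realpow[symmetric])
  have "2 powr x = real m" "2 powr (x + 1) = 2 * real m"
    using assms by (simp_all add: x_def powr_add)
  moreover have "2 powr x \<le> 2 powr real_of_int \<lceil>x\<rceil>" "2 powr real_of_int \<lceil>x\<rceil> < 2 powr (x + 1)"
    using ceiling_correct[of x] by simp_all
  ultimately have "real m \<le> real (2 ^ nat \<lceil>x\<rceil>)" "real (2 ^ nat \<lceil>x\<rceil>) < 2 * real m"
    unfolding pow by linarith+
  then show "m \<le> 2 ^ nat \<lceil>log 2 (real m)\<rceil>" "2 ^ nat \<lceil>log 2 (real m)\<rceil> < 2 * m"
    unfolding x_def by linarith+
qed

lemma linear_less_two_power: "6 \<le> m \<Longrightarrow> 8 * m < (2::nat) ^ m"
  by (induction m rule: nat_induct_at_least) simp_all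

lemma power_Suc_add_one_ge: "x ^ Suc m + Suc m * x ^ m \<le> (x + 1 :: nat) ^ Suc m"
proof (induction m)
  case (Suc m)
  have "(x + 1) * (x ^ Suc m + Suc m * x ^ m) \<le> (x + 1) * (x + 1) ^ Suc m"
    using Suc by (rule mult_le_mono2)
  then show ?case by (simp add: algebra_simps)
qed simp

lemma power_add_one_le:
  fixes a :: real
  assumes "4 * real m \<le> a"
  shows "3 * (a + 1) ^ (m - 1) \<le> 4 * a ^ (m - 1)"
proof -
  have a0: "0 \<le> a" and a: "0 < a + 1" using assms by linarith+
  have "1 - 1 / 4 \<le> 1 + real (m - 1) * (- 1 / (a + 1))"
    using assms a by (simp add: field_simps)
  also have "\<dots> \<le> (1 + - 1 / (a + 1)) ^ (m - 1)"
    using a a0 by (intro Bernoulli_inequality) (simp add: field_simps)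
  also have "1 + - 1 / (a + 1) = a / (a + 1)" using a by (simp add: field_simps)
  finally have "3 / 4 \<le> a ^ (m - 1) / (a + 1) ^ (m - 1)" by (simp add: power_divide)
  then show ?thesis using a by (simp add: field_simps)
qed

text \<open>L stands for log |F'|, which is of order s m with s of order log m.\<close>
lemma log_ratio_bounds:
  fixes m s L :: real
  assumes m: "64 \<le> m" and s: "log 2 m + 2 \<le> s" "s \<le> log 2 m + 3" "s + 1 \<le> m"
    and L: "s * (m - 1) \<le> L" "L \<le> (s + 1) * m"
  shows "1 / (2 * m) \<le> log 2 L / L" "log 2 L / L \<le> 4 / m"
proof -
  define l where "l = log 2 m"
  have "log 2 64 \<le> l" unfolding l_def using m by (intro log_mono) auto
  moreover have "log 2 (64::real) = 6"
    using log_nat_power[of 2 2 6] by simp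
  ultimately have l: "6 \<le> l" by simp
  have sl: "l + 2 \<le> s" "s \<le> l + 3" using s unfolding l_def by auto
  have "m \<le> 2 * (m - 1)" using m by simp
  also have "\<dots> \<le> s * (m - 1)" using sl l m by (intro mult_right_mono) auto
  finally have L_ge_m: "m \<le> L" using L by simp
  then have "l \<le> log 2 L" unfolding l_def using m by (intro log_mono) auto
  moreover have "L \<le> 2 * l * m"
  proof -
    have "(s + 1) * m \<le> (2 * l) * m" using sl l m by (intro mult_right_mono) auto
    then show ?thesis using L(2) by simp
  qed
  ultimately have "l / (2 * l * m) \<le> log 2 L / L"
    using l m L_ge_m by (intro frac_le) auto
  then show "1 / (2 * m) \<le> log 2 L / L" using l by simp
  have "(s + 1) * m \<le> m * m" using s(3) m by (intro mult_right_mono) auto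
  then have "L \<le> m * m" using L(2) by simp
  then have "log 2 L \<le> log 2 (m * m)" using L_ge_m m by (intro log_mono) auto
  also have "\<dots> = 2 * l" unfolding l_def using m by (simp add: log_mult)
  finally have "log 2 L \<le> 2 * l" .
  moreover have "l * m / 2 \<le> L"
  proof -
    have "l * (m / 2) \<le> s * (m - 1)" using sl l m by (intro mult_mono) auto
    then show ?thesis using L by simp
  qed
  moreover have "0 \<le> log 2 L" using \<open>l \<le> log 2 L\<close> l by simp
  ultimately have "log 2 L / L \<le> 2 * l / (l * m / 2)" using l m by (intro frac_le) auto
  also have "\<dots> = 4 / m" using l m by (simp add: field_simps)
  finally show "log 2 L / L \<le> 4 / m" .
qed

subsection \<open>Families generated by blocks with distinguished tips\<close>

locale block_family =
  fixes m :: nat and B T :: "nat \<Rightarrow> nat set"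
  assumes blocks_disjoint: "\<lbrakk>i \<in> {1..m}; j \<in> {1..m}; i \<noteq> j\<rbrakk> \<Longrightarrow> B i \<inter> B j = {}"
    and finite_block: "i \<in> {1..m} \<Longrightarrow> finite (B i)"
    and tips_psubset: "i \<in> {1..m} \<Longrightarrow> T i \<subset> B i"
    and tips_nonempty: "i \<in> {1..m} \<Longrightarrow> T i \<noteq> {}"
begin

definition tips :: "nat set" where
  "tips = (\<Union>i\<in>{1..m}. T i)"

definition generators :: "nat set set" where
  "generators = {B i \<union> {t} | i t. i \<in> {1..m} \<and> t \<in> tips}"

text \<open>
  A pattern prescribes the trace of a set on every block: the whole block or a set of tips.
\<close>
definition traces :: "nat \<Rightarrow> nat set set" where
  "traces i = insert (B i) (Pow (T i))"

definition patterns :: "(nat \<Rightarrow> nat set) set" where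
  "patterns = PiE {1..m} traces"

definition thin_patterns :: "(nat \<Rightarrow> nat set) set" where
  "thin_patterns = PiE {1..m} (\<lambda>i. Pow (T i))"

definition thick_patterns :: "(nat \<Rightarrow> nat set) set" where
  "thick_patterns = {f \<in> patterns. \<exists>i\<in>{1..m}. f i = B i}"

definition full_at :: "nat \<Rightarrow> (nat \<Rightarrow> nat set) set" where
  "full_at i = PiE {1..m} (\<lambda>j. if j = i then {B i} else traces j)"

definition glue :: "(nat \<Rightarrow> nat set) \<Rightarrow> nat set" where
  "glue f = (\<Union>i\<in>{1..m}. f i)"

lemma tips_subset_block: "i \<in> {1..m} \<Longrightarrow> T i \<subseteq> B i"
  using tips_psubset by blast

lemma block_not_subset_tips: "i \<in> {1..m} \<Longrightarrow> \<not> B i \<subseteq> T i"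
  using tips_psubset by blast

lemma finite_tips: "i \<in> {1..m} \<Longrightarrow> finite (T i)"
  using finite_block tips_subset_block finite_subset by blast

lemma card_traces: "i \<in> {1..m} \<Longrightarrow> card (traces i) = 2 ^ card (T i) + 1"
  using block_not_subset_tips finite_tips by (simp add: traces_def card_Pow)

lemma finite_patterns: "finite patterns"
  unfolding patterns_def traces_def using finite_tips by (intro finite_PiE) auto

lemma pattern_trace: "f \<in> patterns \<Longrightarrow> i \<in> {1..m} \<Longrightarrow> f i \<in> traces i"
  unfolding patterns_def by (rule PiE_mem)

lemma pattern_subset_block: "f \<in> patterns \<Longrightarrow> i \<in> {1..m} \<Longrightarrow> f i \<subseteq> B i"
  using pattern_trace tips_subset_block unfolding traces_def by blast

lemma pattern_not_full: "f \<in> patterns \<Longrightarrow> i \<in> {1..m} \<Longrightarrow> f i \<noteq> B i \<Longrightarrow> f i \<subseteq> T i"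
  using pattern_trace unfolding traces_def by blast

lemma traces_union: "X \<in> traces i \<Longrightarrow> Y \<in> traces i \<Longrightarrow> i \<in> {1..m} \<Longrightarrow> X \<union> Y \<in> traces i"
  using tips_subset_block unfolding traces_def by auto

lemma glue_Int_block:
  assumes "f \<in> patterns" "i \<in> {1..m}"
  shows "glue f \<inter> B i = f i"
proof
  show "glue f \<inter> B i \<subseteq> f i"
  proof
    fix x assume "x \<in> glue f \<inter> B i"
    then obtain j where j: "j \<in> {1..m}" "x \<in> f j" "x \<in> B i" unfolding glue_def by auto
    then have "j = i" using pattern_subset_block blocks_disjoint assms by blast
    then show "x \<in> f i" using j by simp
  qed
  show "f i \<subseteq> glue f \<inter> B i" using pattern_subset_block[OF assms] assms unfolding glue_def by auto
qed

lemma inj_on_glue: "inj_on glue patterns"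
proof (rule inj_onI)
  fix f g assume f: "f \<in> patterns" and g: "g \<in> patterns" and fg: "glue f = glue g"
  have fi: "f i = g i" if "i \<in> {1..m}" for i
    using glue_Int_block[OF f that] glue_Int_block[OF g that] fg by simp
  from f g show "f = g" unfolding patterns_def by (rule PiE_ext) (rule fi)
qed

lemma thin_patterns_subset: "thin_patterns \<subseteq> patterns"
  unfolding thin_patterns_def patterns_def traces_def by (rule PiE_mono) auto

lemma thin_patterns_iff: "f \<in> thin_patterns \<longleftrightarrow> f \<in> patterns \<and> (\<forall>i\<in>{1..m}. f i \<subseteq> T i)"
  unfolding thin_patterns_def patterns_def traces_def PiE_iff by auto

lemma thick_patterns_eq_diff: "thick_patterns = patterns - thin_patterns"
proof (intro set_eqI)
  fix f
  have "(\<exists>i\<in>{1..m}. f i = B i) \<longleftrightarrow> \<not> (\<forall>i\<in>{1..m}. f i \<subseteq> T i)" if "f \<in> patterns"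
    using pattern_not_full[OF that] block_not_subset_tips by metis
  then show "f \<in> thick_patterns \<longleftrightarrow> f \<in> patterns - thin_patterns"
    by (auto simp: thick_patterns_def thin_patterns_iff)
qed

lemma union_closed_glue_thick: "union_closed (glue ` thick_patterns)"
  unfolding union_closed_def
proof (intro ballI)
  fix X Y assume "X \<in> glue ` thick_patterns" "Y \<in> glue ` thick_patterns"
  then obtain f g i where f: "f \<in> patterns" "X = glue f" and g: "g \<in> patterns" "Y = glue g"
    and i: "i \<in> {1..m}" "f i = B i"
    unfolding thick_patterns_def by auto
  define h where "h = (\<lambda>j\<in>{1..m}. f j \<union> g j)"
  have "h \<in> patterns"
    using f g traces_union pattern_trace unfolding h_def patterns_def by (simp add: PiE_iff)
  moreover have "h i = B i" using i pattern_subset_block[OF g(1) i(1)] unfolding h_def by auto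
  moreover have "X \<union> Y = glue h" using f g unfolding h_def glue_def by auto
  ultimately show "X \<union> Y \<in> glue ` thick_patterns" using i unfolding thick_patterns_def by blast
qed

lemma generators_subset_glue_thick: "generators \<subseteq> glue ` thick_patterns"
proof
  fix X assume "X \<in> generators"
  then obtain i j t where i: "i \<in> {1..m}" and j: "j \<in> {1..m}" "t \<in> T j" and X: "X = B i \<union> {t}"
    unfolding generators_def tips_def by auto
  define f where "f = (\<lambda>l\<in>{1..m}. if l = i then B i else if l = j then {t} else {})"
  have "f \<in> patterns" using j unfolding f_def patterns_def traces_def by (auto simp: PiE_iff)
  moreover have "f i = B i" using i by (simp add: f_def)
  moreover have "glue f = X"
    using i j tips_subset_block[OF j(1)] unfolding X glue_def f_def by (auto split: if_splits)
  ultimately show "X \<in> glue ` thick_patterns" using i unfolding thick_patterns_def by blast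
qed

text \<open>
  Conversely, glue f is the union of the generators B j \<union> {t} with f j = B j and t a tip in
  glue f.
\<close>
lemma glue_thick_subset_uc_generated: "glue ` thick_patterns \<subseteq> uc_generated generators"
proof
  fix X assume "X \<in> glue ` thick_patterns"
  then obtain f i0 where f: "f \<in> patterns" and X: "X = glue f" and i0: "i0 \<in> {1..m}" "f i0 = B i0"
    unfolding thick_patterns_def by auto
  define Y where "Y = {B j \<union> {t} | j t. j \<in> {1..m} \<and> f j = B j \<and> t \<in> tips \<inter> glue f}"
  have Y_gen: "Y \<subseteq> generators" unfolding Y_def generators_def by blast
  have "Y \<subseteq> (\<lambda>(j, t). B j \<union> {t}) ` ({1..m} \<times> tips)" unfolding Y_def by auto
  then have "finite Y"
    using finite_tips unfolding tips_def by (auto intro: finite_subset)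
  have full_in_Y: "\<exists>Z\<in>Y. B j \<subseteq> Z" if j: "j \<in> {1..m}" "f j = B j" for j
  proof -
    obtain t where "t \<in> T j" using tips_nonempty[OF j(1)] by blast
    then have "t \<in> tips \<inter> glue f"
      using j tips_subset_block unfolding tips_def glue_def by blast
    then show ?thesis using j unfolding Y_def by blast
  qed
  then have "Y \<noteq> {}" using i0 by blast
  have "\<Union>Y = glue f"
  proof
    show "\<Union>Y \<subseteq> glue f" unfolding Y_def glue_def by blast
    show "glue f \<subseteq> \<Union>Y"
    proof
      fix x assume x: "x \<in> glue f"
      then obtain l where l: "l \<in> {1..m}" "x \<in> f l" unfolding glue_def by auto
      show "x \<in> \<Union>Y"
      proof (cases "f l = B l")
        case True
        then show ?thesis using full_in_Y l by blast
      next
        case False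
        then have "x \<in> tips" using pattern_not_full[OF f l(1)] l unfolding tips_def by blast
        then have "B i0 \<union> {x} \<in> Y" unfolding Y_def using i0 x by blast
        then show ?thesis by blast
      qed
    qed
  qed
  moreover have "\<Union>Y \<in> uc_generated generators"
    using union_closed_Union[OF union_closed_uc_generated \<open>finite Y\<close> \<open>Y \<noteq> {}\<close>]
      Y_gen uc_generated_superset by blast
  ultimately show "X \<in> uc_generated generators" using X by simp
qed

theorem uc_generated_generators: "uc_generated generators = glue ` thick_patterns"
  using uc_generated_minimal[OF generators_subset_glue_thick union_closed_glue_thick]
    glue_thick_subset_uc_generated by blast

lemma card_uc_generated:
  "card (uc_generated generators) =
     (\<Prod>i\<in>{1..m}. 2 ^ card (T i) + 1) - (\<Prod>i\<in>{1..m}. 2 ^ card (T i))"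
proof -
  have "card (uc_generated generators) = card patterns - card thin_patterns"
    unfolding uc_generated_generators thick_patterns_eq_diff
    using inj_on_glue thin_patterns_subset finite_patterns
    by (simp add: card_image inj_on_subset card_Diff_subset finite_subset)
  also have "card patterns = (\<Prod>i\<in>{1..m}. 2 ^ card (T i) + 1)"
    unfolding patterns_def using card_traces by (simp add: card_PiE)
  also have "card thin_patterns = (\<Prod>i\<in>{1..m}. 2 ^ card (T i))"
    unfolding thin_patterns_def using finite_tips by (simp add: card_PiE card_Pow)
  finally show ?thesis .
qed

lemma full_at_eq:
  assumes "i \<in> {1..m}"
  shows "full_at i = {f \<in> patterns. f i = B i}"
proof -
  have "B i \<in> traces i" by (simp add: traces_def)
  then have "(\<forall>j\<in>{1..m}. f j \<in> (if j = i then {B i} else traces j)) \<longleftrightarrow>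
      (\<forall>j\<in>{1..m}. f j \<in> traces j) \<and> f i = B i" for f
    using assms by (smt (verit) singletonD singletonI)
  then show ?thesis unfolding full_at_def patterns_def set_eq_iff PiE_iff mem_Collect_eq by blast
qed

lemma card_full_at:
  assumes "i \<in> {1..m}"
  shows "card (full_at i) = (\<Prod>j\<in>{1..m} - {i}. 2 ^ card (T j) + 1)"
proof -
  have "card (full_at i) = (\<Prod>j\<in>{1..m}. card (if j = i then {B i} else traces j))"
    unfolding full_at_def by (rule card_PiE) simp
  also have "\<dots> = (\<Prod>j\<in>{1..m} - {i}. card (traces j))"
    using assms by (simp add: prod.remove)
  also have "\<dots> = (\<Prod>j\<in>{1..m} - {i}. 2 ^ card (T j) + 1)"
    using card_traces by (intro prod.cong) auto
  finally show ?thesis .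
qed

lemma glue_full_at_subset:
  assumes "i \<in> {1..m}" "x \<in> B i"
  shows "glue ` full_at i \<subseteq> {A \<in> uc_generated generators. x \<in> A}"
  using assms unfolding uc_generated_generators full_at_eq[OF assms(1)] thick_patterns_def glue_def
  by blast

lemma members_containing_non_tip:
  assumes "i \<in> {1..m}" "x \<in> B i - T i"
  shows "{A \<in> uc_generated generators. x \<in> A} = glue ` full_at i"
proof
  show "{A \<in> uc_generated generators. x \<in> A} \<subseteq> glue ` full_at i"
  proof
    fix A assume "A \<in> {A \<in> uc_generated generators. x \<in> A}"
    then obtain f where f: "f \<in> patterns" "A = glue f" "x \<in> glue f"
      unfolding uc_generated_generators thick_patterns_def by auto
    then have "x \<in> f i" using glue_Int_block assms by blast
    then have "f i = B i" using pattern_not_full[OF f(1) assms(1)] assms by blast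
    then show "A \<in> glue ` full_at i" using f full_at_eq[OF assms(1)] by blast
  qed
  show "glue ` full_at i \<subseteq> {A \<in> uc_generated generators. x \<in> A}"
    using glue_full_at_subset assms by blast
qed

lemma card_glue_full_at: "i \<in> {1..m} \<Longrightarrow> card (glue ` full_at i) = card (full_at i)"
  using inj_on_glue full_at_eq by (auto intro: card_image inj_on_subset)

lemma uc_generated_member_subset: "A \<in> uc_generated generators \<Longrightarrow> A \<subseteq> (\<Union>i\<in>{1..m}. B i)"
  unfolding uc_generated_generators thick_patterns_def glue_def
  using pattern_subset_block by blast

lemma uc_generated_member_full: "A \<in> uc_generated generators \<Longrightarrow> \<exists>i\<in>{1..m}. B i \<subseteq> A"
  unfolding uc_generated_generators thick_patterns_def glue_def by blast

lemma Union_blocks_in_uc_generated: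
  assumes "1 \<le> m"
  shows "(\<Union>i\<in>{1..m}. B i) \<in> uc_generated generators"
proof -
  have "restrict B {1..m} \<in> thick_patterns"
    using assms unfolding thick_patterns_def patterns_def traces_def by auto
  moreover have "glue (restrict B {1..m}) = (\<Union>i\<in>{1..m}. B i)" unfolding glue_def by simp
  ultimately show ?thesis unfolding uc_generated_generators by (metis image_eqI)
qed

end

subsection \<open>The construction\<close>

locale aod_construction =
  fixes m s k n :: nat and B T :: "nat \<Rightarrow> nat set"
  assumes m_ge_64: "64 \<le> m"
    and s_def: "s = nat \<lceil>log 2 (real m)\<rceil> + 2"
    and k_def: "k = m^2 * s"
    and n_def: "n = k * m"
    and blocks_cover: "(\<Union>i\<in>{1..m}. B i) = {1..n}"
    and blocks_pairwise_disjoint: "\<forall>i\<in>{1..m}. \<forall>j\<in>{1..m}. i \<noteq> j \<longrightarrow> B i \<inter> B j = {}"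
    and card_blocks: "\<forall>i\<in>{1..m}. card (B i) = k"
    and tips_in_blocks: "\<forall>i\<in>{1..m}. T i \<subseteq> B i \<and> card (T i) = s"
begin

lemma two_power_s_bounds: "4 * m \<le> 2 ^ s" "2 ^ s \<le> 8 * m"
proof -
  have "(2::nat) ^ s = 4 * 2 ^ nat \<lceil>log 2 (real m)\<rceil>" by (simp add: s_def power_add)
  then show "4 * m \<le> 2 ^ s" "2 ^ s \<le> 8 * m"
    using two_power_ceiling_log_bounds[of m] m_ge_64 by auto
qed

lemma s_ge_2: "2 \<le> s"
  using s_def by simp

lemma s_less_m: "s + 1 \<le> m"
proof (rule ccontr)
  assume "\<not> s + 1 \<le> m"
  then have "(2::nat) ^ m \<le> 2 ^ s" by (intro power_increasing) auto
  then show False using linear_less_two_power[of m] two_power_s_bounds m_ge_64 by linarith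
qed

lemma s_less_k: "s < k"
proof -
  have "1 < m^2" using m_ge_64 by (intro one_less_power) auto
  then have "1 * s < m^2 * s" using s_ge_2 by (intro mult_strict_right_mono) auto
  then show ?thesis by (simp add: k_def)
qed

lemma card_tips: "i \<in> {1..m} \<Longrightarrow> card (T i) = s"
  using tips_in_blocks by blast

sublocale block_family m B T
proof
  fix i j assume "i \<in> {1..m}" "j \<in> {1..m}" "i \<noteq> j"
  then show "B i \<inter> B j = {}" using blocks_pairwise_disjoint by blast
next
  fix i assume i: "i \<in> {1..m}"
  then have card_B: "card (B i) = k" and T_B: "T i \<subseteq> B i" and card_T: "card (T i) = s"
    using card_blocks tips_in_blocks by auto
  then show "finite (B i)" using s_less_k by (intro card_ge_0_finite) simp
  show "T i \<subset> B i" using T_B card_B card_T s_less_k by auto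
  show "T i \<noteq> {}" using card_T s_ge_2 by auto
qed

definition F :: "nat set set" where
  "F = uc_generated generators"

definition cosingletons :: "nat set set" where
  "cosingletons = {{1..n} - {j} | j. j \<in> {1..n}}"

definition F' :: "nat set set" where
  "F' = F \<union> cosingletons"

lemma card_F: "card F = (2 ^ s + 1) ^ m - (2 ^ s) ^ m"
proof -
  have "(\<Prod>i\<in>{1..m}. 2 ^ card (T i) + 1) = (\<Prod>i\<in>{1..m}. 2 ^ s + 1::nat)"
    "(\<Prod>i\<in>{1..m}. 2 ^ card (T i)) = (\<Prod>i\<in>{1..m}. 2 ^ s::nat)"
    using card_tips by (auto intro: prod.cong)
  then show ?thesis unfolding F_def card_uc_generated by simp
qed

lemma card_full_at_eq: "i \<in> {1..m} \<Longrightarrow> card (full_at i) = (2 ^ s + 1) ^ (m - 1)"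
proof -
  assume i: "i \<in> {1..m}"
  have "(\<Prod>j\<in>{1..m} - {i}. 2 ^ card (T j) + 1) = (\<Prod>j\<in>{1..m} - {i}. 2 ^ s + 1::nat)"
    using card_tips by (auto intro: prod.cong)
  then show ?thesis using i by (simp add: card_full_at)
qed

lemma finite_F: "finite F"
  unfolding F_def uc_generated_generators thick_patterns_def using finite_patterns by simp

lemma cosingletons_eq: "cosingletons = (\<lambda>j. {1..n} - {j}) ` {1..n}"
  unfolding cosingletons_def by blast

lemma card_cosingletons: "card cosingletons \<le> n"
  unfolding cosingletons_eq using card_image_le[of "{1..n}"] by simp

lemma finite_F': "finite F'"
  unfolding F'_def cosingletons_eq using finite_F by simp

lemma card_F_le_F': "card F \<le> card F'"
  unfolding F'_def using finite_F' F'_def by (simp add: card_mono)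

lemma card_F'_le: "card F' \<le> card F + n"
  unfolding F'_def using card_Un_le[of F cosingletons] card_cosingletons by simp

lemma full_set_in_F: "{1..n} \<in> F"
  using Union_blocks_in_uc_generated m_ge_64 blocks_cover unfolding F_def by simp

lemma card_F'_pos: "0 < card F'"
  using finite_F' full_set_in_F by (auto simp: card_gt_0_iff F'_def)

lemma F'_member:
  assumes "A \<in> F'"
  shows "A \<subseteq> {1..n} \<and> k \<le> card A"
proof -
  consider (F) "A \<in> F" | (cosingleton) j where "j \<in> {1..n}" "A = {1..n} - {j}"
    using assms unfolding F'_def cosingletons_def by blast
  then show ?thesis
  proof cases
    case F
    then obtain i where i: "i \<in> {1..m}" "B i \<subseteq> A"
      using uc_generated_member_full unfolding F_def by blast
    have "A \<subseteq> {1..n}" using F uc_generated_member_subset blocks_cover unfolding F_def by blast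
    moreover have "card (B i) \<le> card A"
      using i(2) calculation by (intro card_mono) (auto intro: finite_subset)
    ultimately show ?thesis using card_blocks i(1) by simp
  next
    case cosingleton
    have "k * 2 \<le> n" unfolding n_def using m_ge_64 by (intro mult_le_mono2) auto
    then have "k \<le> n - 1" using s_less_k by linarith
    then show ?thesis using cosingleton by simp
  qed
qed

lemma count_lower:
  assumes "i \<in> {1..m}" "x \<in> B i"
  shows "(2 ^ s + 1) ^ (m - 1) \<le> card {A \<in> F'. x \<in> A}"
proof -
  have "glue ` full_at i \<subseteq> {A \<in> F'. x \<in> A}"
    using glue_full_at_subset[OF assms] unfolding F'_def F_def by blast
  then have "card (glue ` full_at i) \<le> card {A \<in> F'. x \<in> A}"
    using finite_F' by (intro card_mono) auto
  then show ?thesis using assms(1) card_glue_full_at card_full_at_eq by simp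
qed

lemma count_upper:
  assumes "i \<in> {1..m}" "x \<in> B i" "x \<notin> tips"
  shows "card {A \<in> F'. x \<in> A} \<le> (2 ^ s + 1) ^ (m - 1) + n"
proof -
  have "x \<in> B i - T i" using assms unfolding tips_def by blast
  then have count_F: "card {A \<in> F. x \<in> A} = (2 ^ s + 1) ^ (m - 1)"
    using assms(1) members_containing_non_tip card_glue_full_at card_full_at_eq
    unfolding F_def by simp
  have "card {A \<in> F'. x \<in> A} \<le> card ({A \<in> F. x \<in> A} \<union> cosingletons)"
    using finite_F' unfolding F'_def by (intro card_mono) auto
  also have "\<dots> \<le> card {A \<in> F. x \<in> A} + card cosingletons" by (rule card_Un_le)
  finally show ?thesis using count_F card_cosingletons by linarith
qed

lemma n_le_count: "n \<le> (2 ^ s + 1) ^ (m - 1)"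
proof -
  have "n = m^2 * s * m" using n_def k_def by simp
  also have "\<dots> \<le> m^2 * m * m" using s_less_m by simp
  also have "\<dots> = m ^ 4" by (simp add: power2_eq_square power4_eq_xxxx)
  also have "\<dots> \<le> m ^ (m - 1)" using m_ge_64 by (intro power_increasing) auto
  also have "\<dots> \<le> (2 ^ s + 1) ^ (m - 1)" using two_power_s_bounds by (intro power_mono) auto
  finally show ?thesis .
qed

lemma card_F_ge: "m * (2 ^ s) ^ (m - 1) \<le> card F"
proof -
  have "m = Suc (m - 1)" using m_ge_64 by simp
  then have "(2 ^ s) ^ m + m * (2 ^ s) ^ (m - 1) \<le> (2 ^ s + 1) ^ m"
    using power_Suc_add_one_ge[of "2 ^ s" "m - 1"] by metis
  then show ?thesis using card_F by simp
qed

lemma card_F'_le_count: "card F' \<le> (2 ^ s + 2) * (2 ^ s + 1) ^ (m - 1)"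
proof -
  have "card F' \<le> (2 ^ s + 1) ^ m + (2 ^ s + 1) ^ (m - 1)"
    using card_F card_F'_le n_le_count by linarith
  also have "(2 ^ s + 1) ^ m = (2 ^ s + 1) * (2 ^ s + 1::nat) ^ (m - 1)"
    using m_ge_64 by (cases m) auto
  finally show ?thesis by (simp add: algebra_simps)
qed

lemma abundance_ge:
  assumes "x \<in> {1..n}"
  shows "1 / (10 * real m) \<le> abundance F' x"
proof -
  obtain i where i: "i \<in> {1..m}" "x \<in> B i" using assms blocks_cover by blast
  define p where "p = real ((2 ^ s + 1) ^ (m - 1))"
  define a where "a = real ((2::nat) ^ s)"
  have p: "0 < p" unfolding p_def using zero_less_power[of "2 ^ s + 1::nat" "m - 1"] by linarith
  have count: "p \<le> real (card {A \<in> F'. x \<in> A})"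
    unfolding p_def using count_lower[OF i] by linarith
  have "real (card F') \<le> real ((2 ^ s + 2) * (2 ^ s + 1) ^ (m - 1))"
    using card_F'_le_count by (simp only: of_nat_le_iff)
  also have "\<dots> = (a + 2) * p" unfolding a_def p_def by (simp add: algebra_simps)
  finally have card: "real (card F') \<le> (a + 2) * p" .
  have "a + 2 \<le> 10 * real m" unfolding a_def using two_power_s_bounds m_ge_64 by linarith
  moreover have "0 \<le> a" unfolding a_def by simp
  ultimately have "1 / (10 * real m) \<le> 1 / (a + 2)" using m_ge_64 by (intro divide_left_mono) auto
  also have "\<dots> = p / ((a + 2) * p)" using p by simp
  also have "\<dots> \<le> real (card {A \<in> F'. x \<in> A}) / real (card F')"
    using count card p card_F'_pos by (intro frac_le) auto
  finally show ?thesis unfolding abundance_def .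
qed

lemma abundance_le:
  assumes "x \<in> {1..n}" "x \<notin> tips"
  shows "abundance F' x \<le> 3 / real m"
proof -
  obtain i where i: "i \<in> {1..m}" "x \<in> B i" using assms blocks_cover by blast
  define p where "p = real ((2 ^ s + 1) ^ (m - 1))"
  define q where "q = real ((2::nat) ^ s) ^ (m - 1)"
  have m: "0 < real m" using m_ge_64 by simp
  have p: "0 < p" unfolding p_def using zero_less_power[of "2 ^ s + 1::nat" "m - 1"] by linarith
  have count: "real (card {A \<in> F'. x \<in> A}) \<le> 2 * p"
    using count_upper[OF i assms(2)] n_le_count unfolding p_def by linarith
  have "real (m * (2 ^ s) ^ (m - 1)) \<le> real (card F')"
    using card_F_ge card_F_le_F' by (simp only: of_nat_le_iff)
  then have card_ge: "real m * q \<le> real (card F')" unfolding q_def by simp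
  have "real (4 * m) \<le> real ((2::nat) ^ s)" using two_power_s_bounds(1) by (simp only: of_nat_le_iff)
  then have "3 * p \<le> 4 * q"
    using power_add_one_le[of m "real (2 ^ s)"] unfolding p_def q_def by (simp add: add.commute)
  then have "real m * (3 / 4 * p) \<le> real m * q" using m by (intro mult_left_mono) auto
  then have card: "real m * (3 / 4 * p) \<le> real (card F')" using card_ge by linarith
  have "real (card {A \<in> F'. x \<in> A}) / real (card F') \<le> (2 * p) / (real m * (3 / 4 * p))"
    using count card m p by (intro frac_le) auto
  also have "\<dots> \<le> 3 / real m" using m p by (simp add: field_simps)
  finally show ?thesis unfolding abundance_def .
qed

lemma AOD_F'_ge: "1 / (10 * real m) \<le> AOD F'"
proof (rule AOD_ge_abundance_bound)
  show "finite F'" by (rule finite_F')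
  show "F' \<noteq> {}" using full_set_in_F unfolding F'_def by blast
  show "{} \<notin> F'" using F'_member s_less_k by fastforce
  show "finite A" if "A \<in> F'" for A using F'_member[OF that] finite_subset by blast
  show "1 / (10 * real m) \<le> abundance F' x" if "x \<in> \<Union>F'" for x
    using that F'_member abundance_ge by blast
qed

lemma card_tips_le: "card tips \<le> m * s"
proof -
  have "card tips \<le> (\<Sum>i\<in>{1..m}. card (T i))" unfolding tips_def by (rule card_UN_le) simp
  also have "\<dots> = m * s" using card_tips by simp
  finally show ?thesis .
qed

lemma AOD_F'_le: "AOD F' \<le> 4 / real m"
proof -
  have m: "0 < real m" using m_ge_64 by simp
  have "AOD F' \<le> real (m * s) / real k + 3 / real m"
  proof (rule AOD_le_abundance_bound[where S = tips])
    show "finite F'" by (rule finite_F')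
    show "F' \<noteq> {}" using full_set_in_F unfolding F'_def by blast
    show "0 < real k" using s_less_k by simp
    show "finite A \<and> real k \<le> real (card A)" if "A \<in> F'" for A
      using F'_member[OF that] finite_subset by auto
    show "finite tips" unfolding tips_def using finite_tips by simp
    show "real (card tips) \<le> real (m * s)" using card_tips_le by linarith
    show "0 \<le> 3 / real m" by simp
    show "abundance F' x \<le> 3 / real m" if "x \<in> \<Union>F'" "x \<notin> tips" for x
      using that F'_member abundance_le by blast
  qed
  also have "real (m * s) / real k = 1 / real m"
    using m s_ge_2 unfolding k_def by (simp add: power2_eq_square field_simps)
  finally show ?thesis by simp
qed

lemma log_card_F'_bounds:
  "real s * (real m - 1) \<le> log 2 (real (card F'))"
  "log 2 (real (card F')) \<le> (real s + 1) * real m"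
proof -
  have "(2::nat) ^ (s * (m - 1)) \<le> m * (2 ^ s) ^ (m - 1)"
    using m_ge_64 by (simp add: power_mult)
  also have "\<dots> \<le> card F'" using card_F_ge card_F_le_F' by linarith
  finally have "real ((2::nat) ^ (s * (m - 1))) \<le> real (card F')" by (simp only: of_nat_le_iff)
  then have "log 2 (real ((2::nat) ^ (s * (m - 1)))) \<le> log 2 (real (card F'))"
    by (intro log_mono) auto
  then show "real s * (real m - 1) \<le> log 2 (real (card F'))"
    using m_ge_64 by (simp add: log_nat_power of_nat_diff)
  have "2 \<le> (2::nat) ^ s" using s_ge_2 power_increasing[of 1 s "2::nat"] by simp
  then have "(2 ^ s + 2) * (2 ^ s + 1) ^ (m - 1) \<le> (2 ^ s * 2) * (2 ^ s * 2::nat) ^ (m - 1)"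
    by (intro mult_le_mono power_mono) auto
  also have "\<dots> = (2 ^ (s + 1)) ^ Suc (m - 1)" by simp
  also have "\<dots> = 2 ^ ((s + 1) * m)"
    using m_ge_64 Suc_diff_1[of m] by (simp only: power_mult)
  finally have "real (card F') \<le> real ((2::nat) ^ ((s + 1) * m))"
    using card_F'_le_count by (simp only: of_nat_le_iff)
  then have "log 2 (real (card F')) \<le> log 2 (real ((2::nat) ^ ((s + 1) * m)))"
    using card_F'_pos by (intro log_mono) auto
  then show "log 2 (real (card F')) \<le> (real s + 1) * real m"
    by (simp add: log_nat_power algebra_simps)
qed

lemma s_log_bounds: "log 2 (real m) + 2 \<le> real s" "real s \<le> log 2 (real m) + 3"
proof -
  have "0 \<le> log 2 (real m)" using m_ge_64 by simp
  then have "real s = real_of_int \<lceil>log 2 (real m)\<rceil> + 2" by (simp add: s_def)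
  then show "log 2 (real m) + 2 \<le> real s" "real s \<le> log 2 (real m) + 3"
    using ceiling_correct[of "log 2 (real m)"] by linarith+
qed

lemma aod_estimate:
  defines "L \<equiv> log 2 (real (card F'))"
  shows "1 / 40 * (log 2 L / L) \<le> AOD F'" "AOD F' \<le> 8 * (log 2 L / L)"
proof -
  have "real s + 1 \<le> real m" using s_less_m by linarith
  then have "1 / (2 * real m) \<le> log 2 L / L" "log 2 L / L \<le> 4 / real m"
    using log_ratio_bounds[of "real m" "real s" L] m_ge_64 s_log_bounds log_card_F'_bounds
    unfolding L_def by auto
  moreover have "1 / (10 * real m) = 1 / 40 * (4 / real m)" "4 / real m = 8 * (1 / (2 * real m))"
    by simp_all
  ultimately show "1 / 40 * (log 2 L / L) \<le> AOD F'" "AOD F' \<le> 8 * (log 2 L / L)"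
    using AOD_F'_ge AOD_F'_le by linarith+
qed

lemma union_closed_F': "union_closed F'"
  unfolding union_closed_def
proof (intro ballI)
  have with_cosingleton: "X \<union> ({1..n} - {j}) \<in> F'" if "X \<subseteq> {1..n}" "j \<in> {1..n}" for X j
  proof (cases "j \<in> X")
    case True
    then have "X \<union> ({1..n} - {j}) = {1..n}" using that by auto
    then show ?thesis using full_set_in_F unfolding F'_def by simp
  next
    case False
    then have "X \<union> ({1..n} - {j}) = {1..n} - {j}" using that by auto
    then show ?thesis using that unfolding F'_def cosingletons_def by auto
  qed
  fix X Y assume X: "X \<in> F'" and Y: "Y \<in> F'"
  consider "X \<in> F" "Y \<in> F" | j where "j \<in> {1..n}" "X = {1..n} - {j}"
    | j where "j \<in> {1..n}" "Y = {1..n} - {j}"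
    using X Y unfolding F'_def cosingletons_def by blast
  then show "X \<union> Y \<in> F'"
  proof cases
    case 1
    then show ?thesis using union_closed_uc_generated unfolding F'_def F_def union_closed_def by blast
  next
    case 2
    then show ?thesis using with_cosingleton F'_member[OF Y] by (simp add: Un_commute)
  next
    case 3
    then show ?thesis using with_cosingleton F'_member[OF X] by simp
  qed
qed

lemma separates_points_F': "separates_points n F'"
  unfolding separates_points_def
proof (intro ballI impI)
  fix i j :: nat assume "i \<in> {1..n}" "j \<in> {1..n}" "i \<noteq> j"
  then have "{1..n} - {i} \<in> F'" "({1..n} - {i}) \<inter> {i, j} = {j}"
    unfolding F'_def cosingletons_def by auto
  then show "\<exists>A\<in>F'. card (A \<inter> {i, j}) = 1" by (intro bexI[of _ "{1..n} - {i}"]) auto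
qed

end

theorem mainTheorem5:
  shows "\<exists>(c::real) (C::real) (m0::nat). c > 0 \<and> C > 0 \<and>
    (\<forall>(m::nat) (s::nat) (k::nat) (n::nat) (B::nat \<Rightarrow> nat set) (T::nat \<Rightarrow> nat set).
       m \<ge> m0 \<longrightarrow>
       s = nat \<lceil>log 2 (real m)\<rceil> + 2 \<longrightarrow>
       k = m^2 * s \<longrightarrow>
       n = k * m \<longrightarrow>
       (\<Union>i\<in>{1..m}. B i) = {1..n} \<longrightarrow>
       (\<forall>i\<in>{1..m}. \<forall>j\<in>{1..m}. i \<noteq> j \<longrightarrow> B i \<inter> B j = {}) \<longrightarrow>
       (\<forall>i\<in>{1..m}. card (B i) = k) \<longrightarrow>
       (\<forall>i\<in>{1..m}. T i \<subseteq> B i \<and> card (T i) = s) \<longrightarrow>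
       (let TT = (\<Union>i\<in>{1..m}. T i);
            F = uc_generated {B i \<union> {t} | i t. i \<in> {1..m} \<and> t \<in> TT};
            F' = F \<union> {{1..n} - {j} | j. j \<in> {1..n}};
            L = log 2 (real (card F'))
        in union_closed F' \<and> separates_points n F' \<and>
           c * (log 2 L / L) \<le> AOD F' \<and> AOD F' \<le> C * (log 2 L / L)))"
proof (rule exI[of _ "1 / 40"], rule exI[of _ "8::real"], rule exI[of _ "64::nat"],
    intro conjI allI impI)
  fix m s k n :: nat and B T :: "nat \<Rightarrow> nat set"
  assume "64 \<le> m" "s = nat \<lceil>log 2 (real m)\<rceil> + 2" "k = m^2 * s" "n = k * m"
    "(\<Union>i\<in>{1..m}. B i) = {1..n}"
    "\<forall>i\<in>{1..m}. \<forall>j\<in>{1..m}. i \<noteq> j \<longrightarrow> B i \<inter> B j = {}"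
    "\<forall>i\<in>{1..m}. card (B i) = k"
    "\<forall>i\<in>{1..m}. T i \<subseteq> B i \<and> card (T i) = s"
  then interpret aod_construction m s k n B T by unfold_locales
  show "let TT = (\<Union>i\<in>{1..m}. T i);
            F = uc_generated {B i \<union> {t} | i t. i \<in> {1..m} \<and> t \<in> TT};
            F' = F \<union> {{1..n} - {j} | j. j \<in> {1..n}};
            L = log 2 (real (card F'))
        in union_closed F' \<and> separates_points n F' \<and>
           1 / 40 * (log 2 L / L) \<le> AOD F' \<and> AOD F' \<le> 8 * (log 2 L / L)"
    using union_closed_F' separates_points_F' aod_estimate
    unfolding Let_def F'_def F_def cosingletons_def generators_def tips_def by blast
qed simp_all

end
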